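(* Let $G$ be a connected simple graph with maximum degree at most $3$ and minimum degree at least $2$, in which no two adjacent vertices both have degree $3$. Let $M_1,M_2$ be disjoint matchings of $G$ such that $|M_1\cup M_2|$ is maximum over all pairs of disjoint matchings, and, subject to this, such that $G_{M_1,M_2}$ has the minimum number of connected components. Let $H$ be the graph with vertex set $E(G)\setminus(M_1\cup M_2)$ in which two distinct edges are adjacent if and only if their distance in $G$ is at most $2$. Then $H$ has no odd cycle.
   Context: $G_{M_1,M_2}$ denotes the subgraph of $G$ induced by the edge set $E(G)\setminus(M_1\cup M_2)$. The distance between two edges of $G$ is the distance between the corresponding vertices in the line graph of $G$. *)

theory Defs
  imports Main
begin

definition simple_graph :: "'a set \<Rightarrow> 'a set set \<Rightarrow> bool" where
  "simple_graph V E \<longleftrightarrow> finite V \<and> (\<forall>e\<in>E. e \<subseteq> V \<and> card e = 2)"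

definition degree :: "'a set set \<Rightarrow> 'a \<Rightarrow> nat" where
  "degree E v = card {e \<in> E. v \<in> e}"

definition adj_rel :: "'a set set \<Rightarrow> ('a \<times> 'a) set" where
  "adj_rel E = {(u, v). {u, v} \<in> E}"

definition connected_graph :: "'a set \<Rightarrow> 'a set set \<Rightarrow> bool" where
  "connected_graph V E \<longleftrightarrow> V \<noteq> {} \<and> (\<forall>u\<in>V. \<forall>v\<in>V. (u, v) \<in> (adj_rel E)\<^sup>*)"

definition matching :: "'a set set \<Rightarrow> 'a set set \<Rightarrow> bool" where
  "matching E M \<longleftrightarrow> M \<subseteq> E \<and> (\<forall>e\<in>M. \<forall>f\<in>M. e \<noteq> f \<longrightarrow> e \<inter> f = {})"

(* connected components of the subgraph induced by the edge set F
   (vertex set = all endpoints of edges of F) *)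
definition components :: "'a set set \<Rightarrow> 'a set set" where
  "components F = (\<Union>F) // ((adj_rel F)\<^sup>*)"

definition num_components :: "'a set set \<Rightarrow> nat" where
  "num_components F = card (components F)"

definition line_adj :: "'a set set \<Rightarrow> 'a set \<Rightarrow> 'a set \<Rightarrow> bool" where
  "line_adj E e f \<longleftrightarrow> e \<in> E \<and> f \<in> E \<and> e \<noteq> f \<and> e \<inter> f \<noteq> {}"

(* distance between edges e and f of G (distance in the line graph) is at most k *)
definition edge_dist_le :: "'a set set \<Rightarrow> 'a set \<Rightarrow> 'a set \<Rightarrow> nat \<Rightarrow> bool" where
  "edge_dist_le E e f k \<longleftrightarrow>
     (\<exists>xs. xs \<noteq> [] \<and> length xs \<le> k + 1 \<and> hd xs = e \<and> last xs = f \<and> e \<in> E \<and>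
           (\<forall>i. Suc i < length xs \<longrightarrow> line_adj E (xs ! i) (xs ! Suc i)))"

definition is_cycle :: "'b set \<Rightarrow> ('b \<Rightarrow> 'b \<Rightarrow> bool) \<Rightarrow> 'b list \<Rightarrow> bool" where
  "is_cycle W A cs \<longleftrightarrow> length cs \<ge> 3 \<and> distinct cs \<and> set cs \<subseteq> W \<and>
     (\<forall>i < length cs. A (cs ! i) (cs ! ((i + 1) mod length cs)))"

definition has_odd_cycle :: "'b set \<Rightarrow> ('b \<Rightarrow> 'b \<Rightarrow> bool) \<Rightarrow> bool" where
  "has_odd_cycle W A \<longleftrightarrow> (\<exists>cs. is_cycle W A cs \<and> odd (length cs))"

end

theory Submission
  imports Defs
begin

text \<open>
  Write M = M1 \<union> M2 and R = E - M. Maximality of |M| forbids an R-edge whose ends are both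
  missed by one of the two matchings, even after a Kempe swap of M1 and M2 along a component of
  M; minimality of the number of components of R forbids trading an M-edge for an R-edge that is
  a component of R on its own. Consequently every degree-3 vertex is covered twice by M, a vertex
  of degree 3 or covered by M lies on at most one R-edge, and an R-edge with both ends of degree 2
  is far from all other R-edges.

  Hence two R-edges e, f at distance at most 2 are linked through a degree-2 vertex x of one of
  them, say e, which lies on f or is matched by M into f; say e points to f. Every edge of H is
  oriented in this way, and each e points to at most one f. A cycle of H would therefore be a
  directed cycle, and four consecutive steps of it would produce three degree-2 vertices that are
  ends of one path component of M, which is impossible. So H has no cycle at all.
\<close>

lemma adj_rel_iff [simp]: "(u, v) \<in> adj_rel F \<longleftrightarrow> {u, v} \<in> F"
  by (simp add: adj_rel_def)

lemma sym_adj_rel: "sym (adj_rel F)"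
  by (auto simp: sym_def insert_commute)

lemma adj_rel_rtrancl_sym: "(x, y) \<in> (adj_rel F)\<^sup>* \<Longrightarrow> (y, x) \<in> (adj_rel F)\<^sup>*"
  using sym_rtrancl[OF sym_adj_rel] by (rule symD)

lemma adj_rel_rtrancl_mono: "F \<subseteq> G \<Longrightarrow> (x, y) \<in> (adj_rel F)\<^sup>* \<Longrightarrow> (x, y) \<in> (adj_rel G)\<^sup>*"
  using rtrancl_mono[of "adj_rel F" "adj_rel G"] by (auto simp: adj_rel_def)

lemma adj_rel_rtrancl_endpoint: "(x, y) \<in> (adj_rel F)\<^sup>* \<Longrightarrow> x \<noteq> y \<Longrightarrow> \<exists>h\<in>F. y \<in> h"
  by (induction rule: rtrancl_induct) auto

lemma adj_rel_rtrancl_startpoint: "(x, y) \<in> (adj_rel F)\<^sup>* \<Longrightarrow> x \<noteq> y \<Longrightarrow> \<exists>h\<in>F. x \<in> h"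
  using adj_rel_rtrancl_endpoint[OF adj_rel_rtrancl_sym] by metis

lemma components_eq_image: "components F = (\<lambda>x. (adj_rel F)\<^sup>* `` {x}) ` \<Union>F"
  unfolding components_def quotient_def by auto

lemma finite_components: "finite (\<Union>F) \<Longrightarrow> finite (components F)"
  by (simp add: components_eq_image)

lemma adj_rel_rtrancl_Image_isolated_edge:
  assumes e: "{a, b} \<in> F" and iso: "\<forall>f\<in>F. f \<noteq> {a, b} \<longrightarrow> f \<inter> {a, b} = {}"
  shows "x \<in> {a, b} \<Longrightarrow> (adj_rel F)\<^sup>* `` {x} = {a, b}"
    and "x \<notin> {a, b} \<Longrightarrow> (adj_rel F)\<^sup>* `` {x} = (adj_rel (F - {{a, b}}))\<^sup>* `` {x}"
proof -
  let ?e = "{a, b}" and ?R = "(adj_rel F)\<^sup>*" and ?R' = "(adj_rel (F - {{a, b}}))\<^sup>*"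
  have stays: "z \<in> ?e" if "{y, z} \<in> F" "y \<in> ?e" for y z
    using iso that by (metis Int_iff empty_iff insertI1 insertI2)
  have inside: "y \<in> ?e" if "(x, y) \<in> ?R" "x \<in> ?e" for x y
    using that
  proof (induction rule: rtrancl_induct)
    case (step y z)
    then show ?case using stays[of y z] by simp
  qed
  have "(a, b) \<in> ?R" "(b, a) \<in> ?R" using e by (auto simp: insert_commute)
  then show "?R `` {x} = ?e" if "x \<in> ?e" using inside that by auto
  have outside: "(x, y) \<in> ?R' \<and> y \<notin> ?e" if "(x, y) \<in> ?R" "x \<notin> ?e" for x y
    using that
  proof (induction rule: rtrancl_induct)
    case (step y z)
    then have "{y, z} \<in> F" "y \<notin> ?e" by auto
    then have "z \<notin> ?e" and "(y, z) \<in> adj_rel (F - {?e})"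
      using stays[of z y] by (auto simp: insert_commute)
    then show ?case using step by (meson rtrancl_into_rtrancl)
  qed simp
  then show "?R `` {x} = ?R' `` {x}" if "x \<notin> ?e"
    using that adj_rel_rtrancl_mono[of "F - {?e}" F] by blast
qed

lemma card_components_Diff_isolated_edge:
  assumes fin: "finite (\<Union>F)" and e: "{a, b} \<in> F"
    and iso: "\<forall>f\<in>F. f \<noteq> {a, b} \<longrightarrow> f \<inter> {a, b} = {}"
  shows "card (components F) = Suc (card (components (F - {{a, b}})))"
proof -
  let ?e = "{a, b}" and ?class = "\<lambda>x. (adj_rel F)\<^sup>* `` {x}"
  have U: "\<Union>F = (\<Union>(F - {?e})) \<union> ?e" "?e \<inter> \<Union>(F - {?e}) = {}"
    using e iso by blast+
  have "?class ` \<Union>(F - {?e}) = components (F - {?e})"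
    unfolding components_eq_image
    by (rule image_cong[OF refl], rule adj_rel_rtrancl_Image_isolated_edge(2)[OF e iso])
      (use U(2) in blast)
  moreover have "?class ` ?e = {?e}"
    using adj_rel_rtrancl_Image_isolated_edge(1)[OF e iso] by auto
  ultimately have "components F = insert ?e (components (F - {?e}))"
    unfolding components_eq_image[of F] U(1) image_Un by auto
  moreover have "?e \<notin> components (F - {?e})"
    unfolding components_eq_image using U(2) by auto
  moreover have "finite (components (F - {?e}))"
    by (rule finite_components, rule finite_subset[OF _ fin]) auto
  ultimately show ?thesis by simp
qed

lemma card_components_insert_edge_le:
  assumes fin: "finite (\<Union>F)" and p: "p \<in> \<Union>F"
  shows "card (components (insert {p, v} F)) \<le> card (components F)"
proof -
  let ?R = "(adj_rel F)\<^sup>*" and ?R' = "(adj_rel (insert {p, v} F))\<^sup>*"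
  have class_eq: "?R' `` {x} = ?R' `` (?R `` {x})" for x
    using adj_rel_rtrancl_mono[of F "insert {p, v} F"] by (auto intro: rtrancl_trans)
  have "(p, v) \<in> ?R'" "(v, p) \<in> ?R'" by (auto simp: insert_commute)
  then have "?R' `` {v} = ?R' `` {p}" by (auto intro: rtrancl_trans)
  then have "components (insert {p, v} F) = (\<lambda>x. ?R' `` {x}) ` \<Union>F"
    unfolding components_eq_image using p by auto
  also have "\<dots> = (\<lambda>C. ?R' `` C) ` components F"
    unfolding components_eq_image image_image class_eq ..
  finally show ?thesis
    using finite_components[OF fin] by (simp add: card_image_le)
qed

lemma card_le_degree: "finite F \<Longrightarrow> S \<subseteq> F \<Longrightarrow> \<forall>g\<in>S. x \<in> g \<Longrightarrow> card S \<le> degree F x"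
  unfolding degree_def by (rule card_mono) auto

lemma degree_ge_1: "finite F \<Longrightarrow> g \<in> F \<Longrightarrow> x \<in> g \<Longrightarrow> degree F x \<ge> 1"
  using card_le_degree[of F "{g}" x] by simp

lemma degree_ge_2:
  "finite F \<Longrightarrow> g \<in> F \<Longrightarrow> h \<in> F \<Longrightarrow> g \<noteq> h \<Longrightarrow> x \<in> g \<Longrightarrow> x \<in> h \<Longrightarrow> degree F x \<ge> 2"
  using card_le_degree[of F "{g, h}" x] by simp

lemma degree_ge_3:
  "finite F \<Longrightarrow> g \<in> F \<Longrightarrow> h \<in> F \<Longrightarrow> k \<in> F \<Longrightarrow> g \<noteq> h \<Longrightarrow> g \<noteq> k \<Longrightarrow> h \<noteq> k
    \<Longrightarrow> x \<in> g \<Longrightarrow> x \<in> h \<Longrightarrow> x \<in> k \<Longrightarrow> degree F x \<ge> 3"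
  using card_le_degree[of F "{g, h, k}" x] by simp

lemma card_2_other_element: "card g = 2 \<Longrightarrow> x \<in> g \<Longrightarrow> \<exists>y. g = {x, y} \<and> x \<noteq> y"
  by (metis card_2_iff doubleton_eq_iff insertE singletonD)

lemma degree_Diff_edge:
  assumes "finite F" "g \<in> F"
  shows "degree (F - {g}) x = (if x \<in> g then degree F x - 1 else degree F x)"
proof -
  have "{h \<in> F - {g}. x \<in> h} = {h \<in> F. x \<in> h} - {g}" by auto
  then show ?thesis using assms unfolding degree_def by (simp add: card_Diff_singleton_if)
qed

lemma adj_rel_rtrancl_Diff_leaf_edge:
  assumes "(q, z) \<in> (adj_rel F)\<^sup>*" and leaf: "\<forall>h\<in>F. p \<in> h \<longrightarrow> h = {p, p'}" and "q \<noteq> p"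
  shows "(q, z) \<in> (adj_rel (F - {{p, p'}}))\<^sup>* \<or> (z = p \<and> (q, p') \<in> (adj_rel (F - {{p, p'}}))\<^sup>*)"
  using assms(1)
proof (induction rule: rtrancl_induct)
  case (step y z)
  let ?R' = "adj_rel (F - {{p, p'}})"
  have yz: "{y, z} \<in> F" using step.hyps(2) by simp
  have "(q, p) \<notin> ?R'\<^sup>*"
    using adj_rel_rtrancl_endpoint[of q p] \<open>q \<noteq> p\<close> leaf by blast
  show ?case
  proof (cases "{y, z} = {p, p'}")
    case True
    then have "(y = p \<and> z = p') \<or> (y = p' \<and> z = p)" by (metis doubleton_eq_iff)
    then show ?thesis using step.IH \<open>(q, p) \<notin> ?R'\<^sup>*\<close> by auto
  next
    case False
    then have "(q, y) \<in> ?R'\<^sup>*" using step.IH leaf yz by auto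
    moreover have "(y, z) \<in> ?R'" using yz False by simp
    ultimately show ?thesis by (meson rtrancl_into_rtrancl)
  qed
qed simp

text \<open>Removing the edge at the leaf p leaves p' as a new leaf in the component of q and r.\<close>

lemma max_degree_2_no_three_leaves:
  assumes "finite F" "\<forall>g\<in>F. card g = 2" "\<forall>x. degree F x \<le> 2"
    and "p \<noteq> q" "q \<noteq> r" "p \<noteq> r" "degree F p = 1" "degree F q = 1" "degree F r = 1"
    and "(q, p) \<in> (adj_rel F)\<^sup>*" "(q, r) \<in> (adj_rel F)\<^sup>*"
  shows False
  using assms
proof (induction "card F" arbitrary: F p q r rule: less_induct)
  case less
  obtain g where g: "{h \<in> F. p \<in> h} = {g}"
    using \<open>degree F p = 1\<close> unfolding degree_def by (rule card_1_singletonE)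
  then have "g \<in> F" "p \<in> g" by auto
  then obtain p' where gp: "g = {p, p'}" "p \<noteq> p'"
    using card_2_other_element[OF less.prems(2)[rule_format, OF \<open>g \<in> F\<close>]] by blast
  define F' where "F' = F - {{p, p'}}"
  have leaf: "\<forall>h\<in>F. p \<in> h \<longrightarrow> h = {p, p'}" using g gp by auto
  then have no_p: "\<not> (\<exists>h\<in>F'. p \<in> h)" unfolding F'_def by auto
  have "q \<noteq> p" using less.prems(4) by simp
  have reach: "(q, p') \<in> (adj_rel F')\<^sup>*" "(q, r) \<in> (adj_rel F')\<^sup>*"
    using adj_rel_rtrancl_Diff_leaf_edge[OF less.prems(10) leaf \<open>q \<noteq> p\<close>]
      adj_rel_rtrancl_Diff_leaf_edge[OF less.prems(11) leaf \<open>q \<noteq> p\<close>]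
      adj_rel_rtrancl_endpoint[of q p F'] no_p \<open>q \<noteq> p\<close> less.prems(6)
    unfolding F'_def by auto
  have deg: "degree F' x = (if x \<in> {p, p'} then degree F x - 1 else degree F x)" for x
    unfolding F'_def using degree_Diff_edge[OF less.prems(1)] \<open>g \<in> F\<close> gp by blast
  have fin': "finite F'" unfolding F'_def using less.prems(1) by simp
  have "\<exists>h\<in>F'. p' \<in> h"
    using adj_rel_rtrancl_startpoint[OF reach(2)] adj_rel_rtrancl_endpoint[OF reach(1)] less.prems(5)
    by (cases "p' = q") auto
  then have "degree F' p' \<ge> 1" using degree_ge_1[OF fin'] by blast
  moreover have "degree F' p' = degree F p' - 1" "degree F p' \<le> 2"
    using deg[of p'] less.prems(3) by simp_all
  ultimately have "degree F p' = 2" by linarith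
  then have "p' \<noteq> q" "p' \<noteq> r" "degree F' p' = 1"
    using deg[of p'] less.prems(8,9) by auto
  moreover have "degree F' q = 1" "degree F' r = 1"
    using deg less.prems(4,6,8,9) \<open>p' \<noteq> q\<close> \<open>p' \<noteq> r\<close> by auto
  moreover have "card F' < card F"
    unfolding F'_def using card_Diff1_less[OF less.prems(1)] \<open>g \<in> F\<close> gp by blast
  moreover have "\<forall>x. degree F' x \<le> 2"
    using less.prems(3) deg by (metis diff_le_self order_trans)
  ultimately show False
    using less.hyps[of F' p' q r] fin' less.prems(2,5) reach unfolding F'_def by blast
qed

lemma edge_dist_le_2_imp_connecting_edge:
  assumes "edge_dist_le E e f 2" "e \<noteq> f"
  shows "\<exists>h\<in>E. e \<inter> h \<noteq> {} \<and> h \<inter> f \<noteq> {}"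
proof -
  obtain xs where xs: "xs \<noteq> []" "length xs \<le> 3" "hd xs = e" "last xs = f" "e \<in> E"
    "\<forall>i. Suc i < length xs \<longrightarrow> line_adj E (xs ! i) (xs ! Suc i)"
    using assms(1) unfolding edge_dist_le_def by auto
  have ends: "xs ! 0 = e" "xs ! (length xs - 1) = f"
    using xs(1,3,4) by (simp_all add: hd_conv_nth last_conv_nth)
  then have "length xs \<noteq> 1" using assms(2) by auto
  moreover have "length xs \<noteq> 0" using xs(1) by simp
  ultimately have "length xs = 2 \<or> length xs = 3" using xs(2) by linarith
  then show ?thesis
  proof
    assume "length xs = 2"
    then show ?thesis using xs(5,6) ends unfolding line_adj_def by fastforce
  next
    assume "length xs = 3"
    then have "line_adj E (xs ! 0) (xs ! 1)" "line_adj E (xs ! 1) (xs ! 2)"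
      using xs(6) by (auto simp: numeral_eq_Suc)
    then show ?thesis using ends \<open>length xs = 3\<close> unfolding line_adj_def by auto
  qed
qed

text \<open>One step against a partial function P forces the next step against P as well, and the
  periodicity of a closed walk carries this all the way round.\<close>

lemma closed_walk_consistently_oriented:
  fixes c :: "nat \<Rightarrow> 'b"
  assumes "0 < k" and period: "\<And>i. c (i mod k) = c i"
    and edge: "\<And>i. P (c i) (c (Suc i)) \<or> P (c (Suc i)) (c i)"
    and functional: "\<And>e f f'. P e f \<Longrightarrow> P e f' \<Longrightarrow> f = f'"
    and no_turn: "\<And>i. c (Suc (Suc i)) \<noteq> c i"
  shows "(\<forall>i. P (c i) (c (Suc i))) \<or> (\<forall>i. P (c (Suc i)) (c i))"
proof (rule disjCI)
  assume "\<not> (\<forall>i. P (c (Suc i)) (c i))"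
  then obtain i0 where i0: "P (c i0) (c (Suc i0))" using edge by blast
  have forward_below: "P (c j) (c (Suc j))" if "j \<le> n" "P (c n) (c (Suc n))" for j n
    using that
  proof (induction j rule: inc_induct)
    case (step j)
    then show ?case using edge[of j] functional no_turn by metis
  qed
  show "\<forall>i. P (c i) (c (Suc i))"
  proof
    fix i
    have "c (i0 + k * i) = c i0" "c (Suc (i0 + k * i)) = c (Suc i0)"
      using period[of "i0 + k * i"] period[of i0] period[of "Suc (i0 + k * i)"] period[of "Suc i0"]
      by (simp_all add: mod_Suc_eq)
    moreover have "i \<le> i0 + k * i" using \<open>0 < k\<close> by (simp add: trans_le_add2)
    ultimately show "P (c i) (c (Suc i))" using forward_below i0 by metis
  qed
qed

lemma no_cycle_if_functional_orientation:
  assumes cyc: "is_cycle W A cs"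
    and orient: "\<And>e f. e \<in> W \<Longrightarrow> f \<in> W \<Longrightarrow> A e f \<Longrightarrow> P e f \<or> P f e"
    and functional: "\<And>e f f'. P e f \<Longrightarrow> P e f' \<Longrightarrow> f = f'"
    and no_path: "\<And>d0 d1 d2 d3 d4. P d0 d1 \<Longrightarrow> P d1 d2 \<Longrightarrow> P d2 d3 \<Longrightarrow> P d3 d4 \<Longrightarrow>
      d2 \<noteq> d0 \<Longrightarrow> d3 \<noteq> d1 \<Longrightarrow> d4 \<noteq> d2 \<Longrightarrow> False"
  shows False
proof -
  define k where "k = length cs"
  define c where "c i = cs ! (i mod k)" for i
  have k: "k \<ge> 3" and "distinct cs" "set cs \<subseteq> W"
    and step: "\<forall>i < k. A (cs ! i) (cs ! ((i + 1) mod k))"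
    using cyc unfolding is_cycle_def k_def by auto
  have "0 < k" using k by simp
  have "c i \<in> W" for i
    using \<open>0 < k\<close> unfolding c_def k_def by (intro subsetD[OF \<open>set cs \<subseteq> W\<close>] nth_mem) simp
  moreover have "A (c i) (c (Suc i))" for i
    using step[rule_format, of "i mod k"] \<open>0 < k\<close> unfolding c_def by (simp add: mod_Suc_eq)
  ultimately have "P (c i) (c (Suc i)) \<or> P (c (Suc i)) (c i)" for i
    using orient by blast
  moreover have no_turn: "c (Suc (Suc i)) \<noteq> c i" for i
  proof
    assume "c (Suc (Suc i)) = c i"
    then have "(i + 2) mod k = i mod k"
      using \<open>distinct cs\<close> \<open>0 < k\<close> unfolding c_def k_def by (simp add: nth_eq_iff_index_eq)
    then have "k dvd 2" using mod_eq_dvd_iff_nat[of i "i + 2" k] by simp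
    then show False using k by (auto dest: dvd_imp_le)
  qed
  moreover have "c (i mod k) = c i" for i unfolding c_def by simp
  ultimately consider "\<forall>i. P (c i) (c (Suc i))" | "\<forall>i. P (c (Suc i)) (c i)"
    using closed_walk_consistently_oriented[OF \<open>0 < k\<close>] functional by blast
  then show False
  proof cases
    case 1
    then show False using no_path[of "c 0" "c 1" "c 2" "c 3" "c 4"] no_turn
      by (simp add: numeral_eq_Suc)
  next
    case 2
    then show False using no_path[of "c 4" "c 3" "c 2" "c 1" "c 0"] no_turn[THEN not_sym]
      by (simp add: numeral_eq_Suc)
  qed
qed

lemma degree_le_1_if_matching: "matching E N \<Longrightarrow> degree N x \<le> 1"
  unfolding degree_def matching_def
  by (cases "finite {g \<in> N. x \<in> g}") (auto simp: card_le_Suc0_iff_eq)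

definition swap :: "'a set set \<Rightarrow> 'a set set \<Rightarrow> 'a set set \<Rightarrow> 'a set set" where
  "swap K N1 N2 = (N1 - K) \<union> (N2 \<inter> K)"

lemma matching_swap:
  assumes "matching E N1" "matching E N2"
    and closed: "\<And>g h. g \<in> K \<Longrightarrow> h \<in> N1 \<union> N2 \<Longrightarrow> g \<inter> h \<noteq> {} \<Longrightarrow> h \<in> K"
  shows "matching E (swap K N1 N2)"
  unfolding matching_def
proof (intro conjI ballI impI)
  show "swap K N1 N2 \<subseteq> E" using assms(1,2) unfolding matching_def swap_def by blast
next
  fix e f assume ef: "e \<in> swap K N1 N2" "f \<in> swap K N1 N2" "e \<noteq> f"
  show "e \<inter> f = {}"
  proof (rule ccontr)
    assume meet: "e \<inter> f \<noteq> {}"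
    consider "e \<in> N1 - K" "f \<in> N1 - K" | "e \<in> N2 \<inter> K" "f \<in> N2 \<inter> K"
      | "e \<in> N1 - K" "f \<in> N2 \<inter> K" | "e \<in> N2 \<inter> K" "f \<in> N1 - K"
      using ef(1,2) unfolding swap_def by blast
    then show False
    proof cases
      case 1
      then show ?thesis using assms(1) ef(3) meet unfolding matching_def by blast
    next
      case 2
      then show ?thesis using assms(2) ef(3) meet unfolding matching_def by blast
    next
      case 3
      then show ?thesis using closed[of f e] meet by blast
    next
      case 4
      then show ?thesis using closed[of e f] meet by blast
    qed
  qed
qed

lemma matching_exchange:
  assumes "matching E N" "{p, v} \<in> N" "{v, a} \<in> E" "\<forall>h\<in>N. a \<notin> h"
  shows "matching E (insert {v, a} (N - {{p, v}}))"
proof -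
  have disj: "e \<inter> f = {}" if "e \<in> N" "f \<in> N" "e \<noteq> f" for e f
    using assms(1) that unfolding matching_def by blast
  have new: "{v, a} \<inter> h = {}" if "h \<in> N" "h \<noteq> {p, v}" for h
  proof -
    have "h \<inter> {p, v} = {}" using disj[OF that(1) assms(2) that(2)] .
    then show ?thesis using assms(4) that(1) by blast
  qed
  show ?thesis
    unfolding matching_def
  proof (intro conjI ballI impI)
    show "insert {v, a} (N - {{p, v}}) \<subseteq> E" using assms(1,3) unfolding matching_def by blast
  next
    fix e f assume "e \<in> insert {v, a} (N - {{p, v}})" "f \<in> insert {v, a} (N - {{p, v}})" "e \<noteq> f"
    then show "e \<inter> f = {}" using disj new[of e] new[of f] by (auto simp: Int_commute)
  qed
qed

locale optimal_matching_pair =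
  fixes V :: "'a set" and E M1 M2 :: "'a set set"
  assumes simple: "simple_graph V E"
    and max_degree: "\<forall>v\<in>V. degree E v \<le> 3"
    and min_degree: "\<forall>v\<in>V. degree E v \<ge> 2"
    and no_adjacent_3: "\<forall>u v. {u, v} \<in> E \<longrightarrow> \<not> (degree E u = 3 \<and> degree E v = 3)"
    and matching_M1: "matching E M1" and matching_M2: "matching E M2"
    and disjoint: "M1 \<inter> M2 = {}"
    and max_card: "\<forall>N1 N2. matching E N1 \<and> matching E N2 \<and> N1 \<inter> N2 = {}
           \<longrightarrow> card (N1 \<union> N2) \<le> card (M1 \<union> M2)"
    and min_components: "\<forall>N1 N2. matching E N1 \<and> matching E N2 \<and> N1 \<inter> N2 = {}
           \<and> card (N1 \<union> N2) = card (M1 \<union> M2)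
           \<longrightarrow> num_components (E - (M1 \<union> M2)) \<le> num_components (E - (N1 \<union> N2))"
begin

abbreviation M :: "'a set set" where "M \<equiv> M1 \<union> M2"

text \<open>R is the edge set of the graph G_{M1,M2}; it is the vertex set of H.\<close>

abbreviation R :: "'a set set" where "R \<equiv> E - M"

lemma edge_card: "e \<in> E \<Longrightarrow> card e = 2"
  using simple unfolding simple_graph_def by blast

lemma edge_subset: "e \<in> E \<Longrightarrow> e \<subseteq> V"
  using simple unfolding simple_graph_def by blast

lemma finite_V: "finite V"
  using simple unfolding simple_graph_def by blast

lemma finite_E: "finite E"
  using edge_subset finite_V by (meson Pow_iff finite_Pow_iff finite_subset subsetI)

lemma edge_other_end: "e \<in> E \<Longrightarrow> x \<in> e \<Longrightarrow> \<exists>y. e = {x, y} \<and> x \<noteq> y"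
  by (rule card_2_other_element[OF edge_card])

lemma edge_eq: "e \<in> E \<Longrightarrow> a \<in> e \<Longrightarrow> b \<in> e \<Longrightarrow> a \<noteq> b \<Longrightarrow> e = {a, b}"
  using edge_other_end[of e a] by auto

lemma degree_2_or_3: "x \<in> V \<Longrightarrow> degree E x = 2 \<or> degree E x = 3"
  using max_degree min_degree by fastforce

lemma M_subset_E: "M \<subseteq> E"
  using matching_M1 matching_M2 unfolding matching_def by blast

lemma finite_M: "finite M"
  using M_subset_E finite_E finite_subset by blast

lemma finite_R: "finite R"
  using finite_E by simp

lemma finite_Union_R: "finite (\<Union>R)"
  using edge_subset finite_V by (meson DiffD1 Union_least finite_subset)

lemma degree_M_le_2: "degree M x \<le> 2"
proof -
  have "{g \<in> M. x \<in> g} = {g \<in> M1. x \<in> g} \<union> {g \<in> M2. x \<in> g}" by auto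
  then have "degree M x \<le> degree M1 x + degree M2 x"
    unfolding degree_def by (metis card_Un_le)
  then show ?thesis
    using degree_le_1_if_matching[OF matching_M1, of x] degree_le_1_if_matching[OF matching_M2, of x]
    by linarith
qed

lemma degree_E_split: "degree E x = degree M x + degree R x"
proof -
  have "{g \<in> E. x \<in> g} = {g \<in> M. x \<in> g} \<union> {g \<in> R. x \<in> g}" using M_subset_E by auto
  then show ?thesis
    unfolding degree_def using finite_M finite_R by (simp add: card_Un_disjoint disjoint_iff)
qed

lemma degree_M_le_1_if_degree_2: "degree E x = 2 \<Longrightarrow> f \<in> R \<Longrightarrow> x \<in> f \<Longrightarrow> degree M x \<le> 1"
  using degree_E_split[of x] degree_ge_1[OF finite_R, of f x] by linarith

lemma degree_2_third_edge:
  assumes "degree E x = 2" "g \<in> E" "h \<in> E" "k \<in> E" "g \<noteq> h" "x \<in> g" "x \<in> h" "x \<in> k"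
  shows "k = g \<or> k = h"
  using degree_ge_3[OF finite_E assms(2-4) assms(5) _ _ assms(6-8)] assms(1) by force

definition colouring :: "'a set set \<Rightarrow> 'a set set \<Rightarrow> bool" where
  "colouring N1 N2 \<longleftrightarrow> matching E N1 \<and> matching E N2 \<and> N1 \<inter> N2 = {} \<and> N1 \<union> N2 = M"

lemma colouring_M1_M2: "colouring M1 M2"
  unfolding colouring_def using matching_M1 matching_M2 disjoint by blast

lemma colouring_sym: "colouring N1 N2 \<Longrightarrow> colouring N2 N1"
  unfolding colouring_def by blast

lemma no_R_edge_free_in_colour:
  assumes "colouring N1 N2" "{u, w} \<in> R" "\<forall>h\<in>N1. u \<notin> h" "\<forall>h\<in>N1. w \<notin> h"
  shows False
proof -
  have N: "matching E N1" "matching E N2" "N1 \<inter> N2 = {}" "N1 \<union> N2 = M"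
    using assms(1) unfolding colouring_def by auto
  have "matching E (insert {u, w} N1)"
    using N(1) assms(2-4) unfolding matching_def by auto
  moreover have "insert {u, w} N1 \<inter> N2 = {}" using N(3,4) assms(2) by auto
  ultimately have "card (insert {u, w} N1 \<union> N2) \<le> card M" using max_card N(2) by blast
  moreover have "insert {u, w} N1 \<union> N2 = insert {u, w} M" using N(4) by auto
  ultimately show False using finite_M assms(2) by simp
qed

definition kempe_chain :: "'a \<Rightarrow> 'a set set" where
  "kempe_chain w = {g \<in> M. \<exists>x\<in>g. (w, x) \<in> (adj_rel M)\<^sup>*}"

lemma kempe_chain_iff:
  assumes "g \<in> M" "u \<in> g"
  shows "g \<in> kempe_chain w \<longleftrightarrow> (w, u) \<in> (adj_rel M)\<^sup>*"
proof
  assume "g \<in> kempe_chain w"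
  then obtain x where "x \<in> g" "(w, x) \<in> (adj_rel M)\<^sup>*" unfolding kempe_chain_def by blast
  moreover have "x = u \<or> g = {x, u}" using edge_eq assms M_subset_E \<open>x \<in> g\<close> by blast
  ultimately show "(w, u) \<in> (adj_rel M)\<^sup>*" using assms(1) by (auto intro: rtrancl_into_rtrancl)
qed (use assms in \<open>auto simp: kempe_chain_def\<close>)

lemma colouring_swap_kempe_chain:
  assumes "colouring N1 N2"
  shows "colouring (swap (kempe_chain w) N1 N2) (swap (kempe_chain w) N2 N1)"
proof -
  have N: "matching E N1" "matching E N2" "N1 \<inter> N2 = {}" "N1 \<union> N2 = M"
    using assms unfolding colouring_def by auto
  have closed: "h \<in> kempe_chain w"
    if g: "g \<in> kempe_chain w" and h: "h \<in> M" and meet: "g \<inter> h \<noteq> {}" for g h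
  proof -
    obtain u where "u \<in> g" "u \<in> h" using meet by blast
    then show ?thesis using kempe_chain_iff g h unfolding kempe_chain_def by blast
  qed
  have "matching E (swap (kempe_chain w) N1 N2)"
    by (rule matching_swap[OF N(1,2)]) (use closed N(4) in blast)
  moreover have "matching E (swap (kempe_chain w) N2 N1)"
    by (rule matching_swap[OF N(2,1)]) (use closed N(4) in blast)
  ultimately show ?thesis using N(3,4) unfolding colouring_def swap_def by blast
qed

text \<open>If w is covered by N1, swap the colours along the component of M through w.\<close>

lemma colouring_free_vertex:
  assumes "colouring N1 N2" "degree M w \<le> 1"
  obtains N1' N2' where "colouring N1' N2'" "\<forall>h\<in>N1'. w \<notin> h"
    and "\<And>h x. x \<in> h \<Longrightarrow> (w, x) \<notin> (adj_rel M)\<^sup>* \<Longrightarrow> h \<in> N1' \<longleftrightarrow> h \<in> N1"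
proof (cases "\<forall>h\<in>N1. w \<notin> h")
  case True
  then show ?thesis using that assms(1) by blast
next
  case False
  then obtain h1 where h1: "h1 \<in> N1" "w \<in> h1" by blast
  let ?K = "kempe_chain w"
  have N: "N1 \<inter> N2 = {}" "N1 \<union> N2 = M" using assms(1) unfolding colouring_def by auto
  have "w \<notin> h" if "h \<in> swap ?K N1 N2" for h
  proof
    assume "w \<in> h"
    have "h \<in> M" using that N(2) unfolding swap_def by blast
    with \<open>w \<in> h\<close> have "h \<in> ?K" using kempe_chain_iff by blast
    then have "h \<noteq> h1" "h \<in> M" "h1 \<in> M" using that h1 N unfolding swap_def by auto
    then have "degree M w \<ge> 2" using degree_ge_2[OF finite_M] \<open>w \<in> h\<close> h1(2) by blast
    then show False using assms(2) by simp
  qed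
  moreover have "h \<in> swap ?K N1 N2 \<longleftrightarrow> h \<in> N1"
    if "x \<in> h" "(w, x) \<notin> (adj_rel M)\<^sup>*" for h x
    using that kempe_chain_iff[of h x w] N(2) unfolding swap_def by blast
  ultimately show ?thesis
    using that colouring_swap_kempe_chain[OF assms(1)] by blast
qed

lemma R_edge_ends_M_connected:
  assumes "colouring N1 N2" "{u, w} \<in> R" "\<forall>h\<in>N1. u \<notin> h" "degree M w \<le> 1"
  shows "(w, u) \<in> (adj_rel M)\<^sup>*"
proof (rule ccontr)
  assume "(w, u) \<notin> (adj_rel M)\<^sup>*"
  obtain N1' N2' where N': "colouring N1' N2'" "\<forall>h\<in>N1'. w \<notin> h"
    and same: "\<And>h. u \<in> h \<Longrightarrow> h \<in> N1' \<longleftrightarrow> h \<in> N1"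
    using colouring_free_vertex[OF assms(1,4)] \<open>(w, u) \<notin> (adj_rel M)\<^sup>*\<close> by metis
  have "\<forall>h\<in>N1'. u \<notin> h" using same assms(3) by blast
  then show False using no_R_edge_free_in_colour[OF N'(1) assms(2)] N'(2) by blast
qed

text \<open>Trading the M-edge {p, v} for an R-edge {v, a} that is a component of R keeps the size
  of M, but turns the component {v, a} into the edge {p, v} attached to the R-edge f0.\<close>

lemma isolated_R_edge_exchange:
  assumes N: "colouring N1 N2" "{p, v} \<in> N1" and va: "{v, a} \<in> R"
    and iso: "\<forall>f\<in>R. f \<noteq> {v, a} \<longrightarrow> f \<inter> {v, a} = {}"
    and f0: "f0 \<in> R" "f0 \<noteq> {v, a}" "p \<in> f0"
    and a_free: "\<forall>h\<in>N1. a \<notin> h"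
  shows False
proof -
  let ?N1' = "insert {v, a} (N1 - {{p, v}})"
  have "matching E N1" "matching E N2" "N1 \<inter> N2 = {}" "N1 \<union> N2 = M"
    using N(1) unfolding colouring_def by auto
  then have "matching E ?N1'" "?N1' \<inter> N2 = {}" and M': "?N1' \<union> N2 = insert {v, a} (M - {{p, v}})"
    using matching_exchange[of E N1 p v a] N(2) va a_free by auto
  moreover have "{p, v} \<in> M" using N(2) \<open>N1 \<union> N2 = M\<close> by blast
  then have "card (?N1' \<union> N2) = card M"
    unfolding M' using finite_M va card_Suc_Diff1[OF finite_M] by simp
  ultimately have "num_components R \<le> num_components (E - (?N1' \<union> N2))"
    using min_components \<open>matching E N2\<close> by blast
  also have "E - (?N1' \<union> N2) = insert {p, v} (R - {{v, a}})"
    unfolding M' using va \<open>{p, v} \<in> M\<close> M_subset_E by auto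
  also have "num_components \<dots> \<le> num_components (R - {{v, a}})"
    unfolding num_components_def
  proof (rule card_components_insert_edge_le)
    show "finite (\<Union>(R - {{v, a}}))" using finite_Union_R by (rule finite_subset[rotated]) blast
    show "p \<in> \<Union>(R - {{v, a}})" using f0 by blast
  qed
  also have "\<dots> < num_components R"
    unfolding num_components_def
    using card_components_Diff_isolated_edge[OF finite_Union_R va iso] by simp
  finally show False by simp
qed

lemma isolated_R_edge_M_connected:
  assumes N: "colouring N1 N2" "{p, v} \<in> N1" and va: "{v, a} \<in> R"
    and iso: "\<forall>f\<in>R. f \<noteq> {v, a} \<longrightarrow> f \<inter> {v, a} = {}"
    and f0: "f0 \<in> R" "f0 \<noteq> {v, a}" "p \<in> f0"
    and "degree M a \<le> 1"
  shows "(a, v) \<in> (adj_rel M)\<^sup>*"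
proof (rule ccontr)
  assume "(a, v) \<notin> (adj_rel M)\<^sup>*"
  obtain N1' N2' where "colouring N1' N2'" "\<forall>h\<in>N1'. a \<notin> h"
    and "{p, v} \<in> N1' \<longleftrightarrow> {p, v} \<in> N1"
    using colouring_free_vertex[OF N(1) \<open>degree M a \<le> 1\<close>] \<open>(a, v) \<notin> (adj_rel M)\<^sup>*\<close>
    by (metis insertCI)
  then show False using isolated_R_edge_exchange[OF _ _ va iso f0] N(2) by blast
qed

lemma degree_M_eq_2_if_degree_3:
  assumes "x \<in> V" "degree E x = 3"
  shows "degree M x = 2"
proof (rule ccontr)
  assume "degree M x \<noteq> 2"
  then have dM: "degree M x \<le> 1" using degree_M_le_2[of x] by simp
  then have "\<not> card {g \<in> R. x \<in> g} \<le> Suc 0"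
    using degree_E_split[of x] assms(2) unfolding degree_def by simp
  moreover have "finite {g \<in> R. x \<in> g}" by (rule finite_subset[OF _ finite_R]) blast
  ultimately obtain e1 e2 where "e1 \<in> R" "e2 \<in> R" "e1 \<noteq> e2" "x \<in> e1" "x \<in> e2"
    using card_le_Suc0_iff_eq by blast
  then obtain a y where a: "{x, a} \<in> R" "x \<noteq> a" and y: "{x, y} \<in> R" "x \<noteq> y" and "a \<noteq> y"
    using edge_other_end by (metis DiffD1)
  obtain N1 N2 where N: "colouring N1 N2" "\<forall>h\<in>N1. x \<notin> h"
    using colouring_free_vertex[OF colouring_M1_M2 dM] by metis
  have leaf: "(x, w) \<in> (adj_rel M)\<^sup>* \<and> degree M w = 1" if w: "{x, w} \<in> R" "x \<noteq> w" for w
  proof -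
    have "w \<in> V" using w edge_subset by blast
    then have "degree E w = 2" using no_adjacent_3 degree_2_or_3 w(1) assms(2) by blast
    then have "degree M w \<le> 1" using degree_M_le_1_if_degree_2 w(1) by blast
    moreover from this have "(w, x) \<in> (adj_rel M)\<^sup>*"
      using R_edge_ends_M_connected[OF N(1) w(1) N(2)] by blast
    moreover from this have "degree M w \<ge> 1"
      using adj_rel_rtrancl_startpoint w(2) degree_ge_1[OF finite_M] by metis
    ultimately show ?thesis using adj_rel_rtrancl_sym by fastforce
  qed
  have "degree M x \<ge> 1"
    using leaf[OF a] adj_rel_rtrancl_startpoint a(2) degree_ge_1[OF finite_M] by metis
  then have "degree M x = 1" using dM by simp
  moreover have "\<forall>g\<in>M. card g = 2" using edge_card M_subset_E by blast
  ultimately show False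
    using max_degree_2_no_three_leaves[OF finite_M _ _ a(2)[symmetric] y(2) \<open>a \<noteq> y\<close>]
      leaf[OF a] leaf[OF y] degree_M_le_2 by blast
qed

lemma unique_R_edge:
  assumes "degree E x = 3 \<or> (\<exists>g\<in>M. x \<in> g)" "f \<in> R" "f' \<in> R" "x \<in> f" "x \<in> f'"
  shows "f = f'"
proof (rule ccontr)
  assume "f \<noteq> f'"
  then have "degree R x \<ge> 2" using degree_ge_2[OF finite_R] assms(2-5) by blast
  moreover have "x \<in> V" using assms(2,4) edge_subset by blast
  ultimately show False
    using assms(1) degree_E_split[of x] degree_2_or_3 degree_M_eq_2_if_degree_3
      degree_ge_1[OF finite_M] by fastforce
qed

lemma R_edge_isolated:
  assumes "{v, a} \<in> R" "degree E v = 3 \<or> (\<exists>g\<in>M. v \<in> g)" "degree E a = 3 \<or> (\<exists>g\<in>M. a \<in> g)"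
  shows "\<forall>f\<in>R. f \<noteq> {v, a} \<longrightarrow> f \<inter> {v, a} = {}"
  using unique_R_edge[OF assms(2) _ assms(1)] unique_R_edge[OF assms(3) _ assms(1)] by blast

lemma degree_2_R_edge_covered:
  assumes "{x, y} \<in> R" "degree E x = 2" "degree E y = 2"
  shows "\<exists>h\<in>M. x \<in> h"
proof (rule ccontr)
  assume "\<not> (\<exists>h\<in>M. x \<in> h)"
  moreover obtain N1 N2 where N: "colouring N1 N2" "\<forall>h\<in>N1. y \<notin> h"
    using colouring_free_vertex[OF colouring_M1_M2 degree_M_le_1_if_degree_2[OF assms(3,1)]]
    by (metis insertCI)
  moreover have "N1 \<subseteq> M" using N(1) unfolding colouring_def by blast
  ultimately show False using no_R_edge_free_in_colour[OF N(1) assms(1)] by blast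
qed

lemma degree_2_R_edge_partner_off_R:
  assumes xy: "{x, y} \<in> R" "degree E x = 2" "degree E y = 2"
    and xq: "{x, q} \<in> M" and f: "f \<in> R" "f \<noteq> {x, y}" "q \<in> f"
  shows False
proof -
  obtain N1 N2 where N: "colouring N1 N2" "{x, q} \<in> N1"
    using colouring_M1_M2 colouring_sym xq by blast
  then have N12: "N1 \<inter> N2 = {}" "N1 \<union> N2 = M" unfolding colouring_def by auto
  have "{x, y} \<in> E" "{x, q} \<in> E" "{x, y} \<noteq> {x, q}" using xy(1) xq M_subset_E by auto
  then have "h = {x, q}" if "h \<in> M" "x \<in> h" for h
    using degree_2_third_edge[OF xy(2)] that M_subset_E xy(1) by blast
  then have "\<forall>h\<in>N2. x \<notin> h" using N(2) N12 by blast
  then obtain h2 where h2: "h2 \<in> N2" "y \<in> h2"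
    using no_R_edge_free_in_colour[OF colouring_sym[OF N(1)] xy(1)] by blast
  have "\<forall>h\<in>N1. y \<notin> h"
  proof (intro ballI notI)
    fix h assume "h \<in> N1" "y \<in> h"
    then have "degree M y \<ge> 2" using degree_ge_2[OF finite_M, of h h2 y] h2 N12 by blast
    then show False using degree_M_le_1_if_degree_2[OF xy(3,1)] by simp
  qed
  moreover have "\<forall>f\<in>R. f \<noteq> {x, y} \<longrightarrow> f \<inter> {x, y} = {}"
    using R_edge_isolated[OF xy(1)] xq h2 N12 by blast
  moreover have "{q, x} \<in> N1" using N(2) by (simp add: insert_commute)
  ultimately show False using isolated_R_edge_exchange[OF N(1) _ xy(1) _ f] by blast
qed

definition points_to :: "'a set \<Rightarrow> 'a set \<Rightarrow> bool" where
  "points_to e f \<longleftrightarrow> e \<in> R \<and> f \<in> R \<and> e \<noteq> f \<and>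
     (\<exists>x\<in>e. degree E x = 2 \<and> (x \<in> f \<or> (\<exists>q\<in>f. {x, q} \<in> M)))"

lemma no_points_to_from_degree_2_R_edge:
  assumes "{x, y} \<in> R" "degree E x = 2" "degree E y = 2"
  shows "\<not> points_to {x, y} f"
proof
  assume "points_to {x, y} f"
  then obtain z where f: "f \<in> R" "f \<noteq> {x, y}"
    and z: "z \<in> {x, y}" "z \<in> f \<or> (\<exists>q\<in>f. {z, q} \<in> M)"
    unfolding points_to_def by blast
  obtain w where zw: "{x, y} = {z, w}" "degree E z = 2" "degree E w = 2"
    using z(1) assms(2,3) by (auto simp: insert_commute)
  with assms(1) obtain h where h: "h \<in> M" "z \<in> h" using degree_2_R_edge_covered by metis
  from z(2) show False
  proof
    assume "z \<in> f"
    have "{z, w} \<in> E" "{z, w} \<noteq> h" "f \<in> E" "h \<in> E"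
      using assms(1) zw(1) h f(1) M_subset_E by auto
    then have "f = {z, w} \<or> f = h"
      using degree_2_third_edge[OF zw(2)] h(2) \<open>z \<in> f\<close> by simp
    then show False using f h(1) zw(1) by auto
  next
    assume "\<exists>q\<in>f. {z, q} \<in> M"
    then show False using degree_2_R_edge_partner_off_R[of z w] assms(1) zw f by auto
  qed
qed

lemma points_to_if_linked:
  assumes e: "e \<in> R" and f: "f \<in> R" "e \<noteq> f" and h: "h \<in> E" "e \<inter> h \<noteq> {}" "h \<inter> f \<noteq> {}"
  shows "points_to e f \<or> points_to f e"
proof (cases "e \<inter> f = {}")
  case False
  then obtain z where z: "z \<in> e" "z \<in> f" by blast
  then have "degree E z \<noteq> 3" using unique_R_edge[of z e f] e f by blast
  then have "degree E z = 2" using degree_2_or_3 edge_subset e z(1) by blast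
  then show ?thesis unfolding points_to_def using e f z by blast
next
  case True
  obtain s t where st: "s \<in> e" "s \<in> h" "t \<in> h" "t \<in> f" using h by blast
  then have "s \<noteq> t" using True by blast
  then have hst: "h = {s, t}" using edge_eq h(1) st(2,3) by blast
  have deg: "degree E s = 2 \<or> degree E s = 3" "degree E t = 2 \<or> degree E t = 3"
    using degree_2_or_3 edge_subset h(1) st(2,3) by blast+
  show ?thesis
  proof (cases "h \<in> M")
    case True
    then have "{s, t} \<in> M" "{t, s} \<in> M" using hst by (auto simp: insert_commute)
    moreover have "degree E s = 2 \<or> degree E t = 2"
      using no_adjacent_3 h(1) hst deg by blast
    ultimately show ?thesis unfolding points_to_def using e f st(1,4) by blast
  next
    case False
    then have "h \<in> R" "h \<noteq> e" "h \<noteq> f" using h(1) True st by auto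
    then have "\<not> (degree E s = 3 \<or> (\<exists>g\<in>M. s \<in> g))" "\<not> (degree E t = 3 \<or> (\<exists>g\<in>M. t \<in> g))"
      using unique_R_edge[of s e h] unique_R_edge[of t f h] e f st by auto
    moreover have "{s, t} \<in> R" using \<open>h \<in> R\<close> hst by simp
    ultimately show ?thesis using degree_2_R_edge_covered deg by blast
  qed
qed

lemma points_to_link:
  assumes "points_to e f"
  obtains x g where "x \<in> e" "degree E x = 2" "g \<in> E" "g \<noteq> e" "x \<in> g"
    and "g = f \<or> (g \<in> M \<and> (\<exists>q\<in>f. g = {x, q}))"
proof -
  obtain x where x: "x \<in> e" "degree E x = 2" "x \<in> f \<or> (\<exists>q\<in>f. {x, q} \<in> M)"
    and "e \<in> R" "f \<in> R" "e \<noteq> f"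
    using assms unfolding points_to_def by blast
  then show ?thesis using that M_subset_E by blast
qed

lemma points_to_unique:
  assumes "points_to e f" "points_to e f'"
  shows "f = f'"
proof -
  obtain x g where x: "x \<in> e" "degree E x = 2" "g \<in> E" "g \<noteq> e" "x \<in> g"
    and g: "g = f \<or> (g \<in> M \<and> (\<exists>q\<in>f. g = {x, q}))"
    using points_to_link[OF assms(1)] by blast
  obtain x' g' where x': "x' \<in> e" "degree E x' = 2" "g' \<in> E" "g' \<noteq> e" "x' \<in> g'"
    and g': "g' = f' \<or> (g' \<in> M \<and> (\<exists>q\<in>f'. g' = {x', q}))"
    using points_to_link[OF assms(2)] by blast
  have R: "e \<in> R" "f \<in> R" "f' \<in> R" using assms unfolding points_to_def by auto
  have "x = x'"
  proof (rule ccontr)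
    assume "x \<noteq> x'"
    then have "e = {x, x'}" using edge_eq R(1) x(1) x'(1) by blast
    then show False using no_points_to_from_degree_2_R_edge R(1) x(2) x'(2) assms(1) by metis
  qed
  then have "g' = g" using degree_2_third_edge[OF x(2), of e g g'] x x' R(1) by auto
  show ?thesis
  proof (cases "g = f")
    case True
    then show ?thesis using g' \<open>g' = g\<close> R(2) by auto
  next
    case False
    then obtain q q' where "g \<in> M" "g = {x, q}" "q \<in> f" "g = {x, q'}" "q' \<in> f'"
      using g g' \<open>g' = g\<close> \<open>x = x'\<close> R(3) by auto
    then have "q = q'" "q \<in> g" by (auto simp: doubleton_eq_iff)
    then show ?thesis using unique_R_edge[of q f f'] \<open>g \<in> M\<close> R(2,3) \<open>q \<in> f\<close> \<open>q' \<in> f'\<close> by blast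
  qed
qed

lemma points_to_twice_M_edge:
  assumes "points_to a b" "points_to b c" "c \<noteq> a"
  obtains x y where "x \<in> a" "degree E x = 2" "y \<in> b" "degree E y = 3" "{x, y} \<in> M"
proof -
  obtain x where x: "x \<in> a" "degree E x = 2" "x \<in> b \<or> (\<exists>q\<in>b. {x, q} \<in> M)"
    and R: "a \<in> R" "b \<in> R" "a \<noteq> b"
    using assms(1) unfolding points_to_def by blast
  have "\<not> points_to b a" using points_to_unique assms(2,3) by blast
  then obtain q where q: "q \<in> b" "{x, q} \<in> M" "degree E q \<noteq> 2"
    using x R unfolding points_to_def by (auto simp: insert_commute)
  then have "degree E q = 3" using degree_2_or_3 edge_subset R(2) by blast
  then show ?thesis using that x q by blast
qed

lemma M_connected_across_R_edge:
  assumes d: "d1 \<in> R" "d2 \<in> R" "d1 \<noteq> d2" and "x1 \<in> d1" "{x1, y} \<in> M"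
    and y: "y \<in> d2" "degree E y = 3" and x2: "x2 \<in> d2" "degree E x2 = 2" "\<exists>g\<in>M. x2 \<in> g"
  shows "(x2, y) \<in> (adj_rel M)\<^sup>*"
proof -
  have "y \<noteq> x2" using y(2) x2(2) by auto
  then have d2: "d2 = {y, x2}" using edge_eq d(2) y(1) x2(1) by blast
  obtain N1 N2 where "colouring N1 N2" "{x1, y} \<in> N1"
    using colouring_M1_M2 colouring_sym \<open>{x1, y} \<in> M\<close> by blast
  moreover have "\<forall>f\<in>R. f \<noteq> {y, x2} \<longrightarrow> f \<inter> {y, x2} = {}"
    using R_edge_isolated d(2) d2 y(2) x2(3) by blast
  moreover have "degree M x2 \<le> 1" using degree_M_le_1_if_degree_2 x2 d(2) by blast
  ultimately show ?thesis
    using isolated_R_edge_M_connected[of N1 N2 x1 y x2 d1] d d2 \<open>x1 \<in> d1\<close> by blast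
qed

text \<open>Along a directed path d0, ..., d4 the degree-2 ends x0, x1, x2 of the M-edges found by
  points_to_twice_M_edge are three distinct ends of one path component of M.\<close>

lemma no_points_to_path:
  assumes "points_to d0 d1" "points_to d1 d2" "points_to d2 d3" "points_to d3 d4"
    and "d2 \<noteq> d0" "d3 \<noteq> d1" "d4 \<noteq> d2"
  shows False
proof -
  obtain x0 y1 where A: "x0 \<in> d0" "degree E x0 = 2" "y1 \<in> d1" "degree E y1 = 3" "{x0, y1} \<in> M"
    using points_to_twice_M_edge[OF assms(1,2,5)] by blast
  obtain x1 y2 where B: "x1 \<in> d1" "degree E x1 = 2" "y2 \<in> d2" "degree E y2 = 3" "{x1, y2} \<in> M"
    using points_to_twice_M_edge[OF assms(2,3,6)] by blast
  obtain x2 y3 where C: "x2 \<in> d2" "degree E x2 = 2" "{x2, y3} \<in> M"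
    using points_to_twice_M_edge[OF assms(3,4,7)] by blast
  have R: "d0 \<in> R" "d1 \<in> R" "d2 \<in> R" "d0 \<noteq> d1" "d1 \<noteq> d2"
    using assms(1,2) unfolding points_to_def by auto
  have covered: "\<exists>g\<in>M. x0 \<in> g" "\<exists>g\<in>M. x1 \<in> g" "\<exists>g\<in>M. x2 \<in> g" using A B C by blast+
  have "(x1, y1) \<in> (adj_rel M)\<^sup>*"
    using M_connected_across_R_edge[of d0 d1 x0 y1 x1] R A B(1,2) covered(2) by blast
  moreover have "(y1, x0) \<in> adj_rel M" using A(5) by (simp add: insert_commute)
  ultimately have reach0: "(x1, x0) \<in> (adj_rel M)\<^sup>*" by (rule rtrancl_into_rtrancl)
  have "(x2, y2) \<in> (adj_rel M)\<^sup>*"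
    using M_connected_across_R_edge[of d1 d2 x1 y2 x2] R B C(1,2) covered(3) by blast
  moreover have "(x1, y2) \<in> adj_rel M" using B(5) by simp
  ultimately have reach2: "(x1, x2) \<in> (adj_rel M)\<^sup>*"
    by (meson adj_rel_rtrancl_sym converse_rtrancl_into_rtrancl)
  have "x0 \<noteq> x1" "x1 \<noteq> x2" "x0 \<noteq> x2"
    using unique_R_edge[of x0 d0 d1] unique_R_edge[of x1 d1 d2] unique_R_edge[of x0 d0 d2]
      A(1) B(1) C(1) R covered \<open>d2 \<noteq> d0\<close> by metis+
  moreover have "degree M x = 1" if "x \<in> d" "d \<in> R" "degree E x = 2" "\<exists>g\<in>M. x \<in> g" for x d
    using degree_M_le_1_if_degree_2[OF that(3,2,1)] degree_ge_1[OF finite_M] that(4) by fastforce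
  then have "degree M x0 = 1" "degree M x1 = 1" "degree M x2 = 1"
    using A(1,2) B(1,2) C(1,2) R covered by blast+
  moreover have "\<forall>g\<in>M. card g = 2" using edge_card M_subset_E by blast
  ultimately show False
    using max_degree_2_no_three_leaves[OF finite_M _ _ _ _ _ _ _ _ reach0 reach2] degree_M_le_2
    by blast
qed

lemma R_distance_graph_acyclic: "\<not> is_cycle R (\<lambda>e f. e \<noteq> f \<and> edge_dist_le E e f 2) cs"
proof
  assume "is_cycle R (\<lambda>e f. e \<noteq> f \<and> edge_dist_le E e f 2) cs"
  then show False
  proof (rule no_cycle_if_functional_orientation)
    fix e f assume "e \<in> R" "f \<in> R" "e \<noteq> f \<and> edge_dist_le E e f 2"
    then show "points_to e f \<or> points_to f e"
      using edge_dist_le_2_imp_connecting_edge points_to_if_linked by blast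
  qed (use points_to_unique no_points_to_path in blast)+
qed

end

theorem lemma5:
  fixes V :: "'a set" and E M1 M2 :: "'a set set"
  assumes "simple_graph V E"
    and "connected_graph V E"
    and "\<forall>v\<in>V. degree E v \<le> 3"
    and "\<forall>v\<in>V. degree E v \<ge> 2"
    and "\<forall>u v. {u, v} \<in> E \<longrightarrow> \<not> (degree E u = 3 \<and> degree E v = 3)"
    and "matching E M1" and "matching E M2" and "M1 \<inter> M2 = {}"
    and "\<forall>N1 N2. matching E N1 \<and> matching E N2 \<and> N1 \<inter> N2 = {}
           \<longrightarrow> card (N1 \<union> N2) \<le> card (M1 \<union> M2)"
    and "\<forall>N1 N2. matching E N1 \<and> matching E N2 \<and> N1 \<inter> N2 = {}
           \<and> card (N1 \<union> N2) = card (M1 \<union> M2)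
           \<longrightarrow> num_components (E - (M1 \<union> M2)) \<le> num_components (E - (N1 \<union> N2))"
  shows "\<not> has_odd_cycle (E - (M1 \<union> M2))
           (\<lambda>e f. e \<noteq> f \<and> edge_dist_le E e f 2)"
proof -
  interpret optimal_matching_pair V E M1 M2
    by unfold_locales (use assms in auto)
  show ?thesis
    unfolding has_odd_cycle_def using R_distance_graph_acyclic by blast
qed

end
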